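(* Let $\mathfrak F=(X,\parallel,Y,S_\vee)$ be a frame satisfying (F0)–(F4). The following are equivalent: (1) the incompatibility relation $\perp$ is symmetric; (2) $A\subseteq A^{**}$ for every $A\in\mathcal G(X)$; (3) $A^*=A^{\triangle}$ for every $A\in\mathcal G(X)$, where $A^\triangle=\{x\in X:\overline\eta_S(\Gamma x)\subseteq A'\}$.
   Context: Polarity $(X,\parallel,Y)$, ${\parallel}\subseteq X\times Y$, $I$ its complement. $U'=\{y:\forall x\in U\;x\parallel y\}$ for $U\subseteq X$, $V'=\{x:\forall y\in V\;x\parallel y\}$ for $V\subseteq Y$; stable sets $A=A''\subseteq X$ form $\mathcal G(X)$, co-stable sets $B=B''\subseteq Y$ form $\mathcal G(Y)$ (joins $(\bigcup A_j)''$). $x\preceq z$ iff $\{x\}'\subseteq\{z\}'$, similarly on $Y$; separated means these are partial orders; $\Gamma u$ is the up-set of $u$; closed elements are the sets $\Gamma u$. Frame $(X,\parallel,Y,S_\vee)$, $S_\vee\subseteq Y\times X$, $S_\vee x=\{y:yS_\vee x\}$, $yS_\vee=\{x:yS_\vee x\}$, $zS'_\vee x$ iff $\forall y(yS_\vee x\Rightarrow z\parallel y)$. Axioms (F0) $\forall x\exists y\,xIy$, $\forall y\exists x\,xIy$; (F1) separated; (F2) each $S_\vee x$ a closed element of $\mathcal G(Y)$; (F3) each $yS_\vee$ a down-set; (F4) for each $x$, $\{z:zS'_\vee x\}\in\mathcal G(X)$, for each $z$, $\{x:zS'_\vee x\}\in\mathcal G(X)$. $x\perp z$ iff $xS'_\vee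 z$; $A^*=\{x:\forall z\in A\;x\perp z\}$; $\overline\eta_S(A)=(\bigcup_{x\in A}S_\vee x)''$. *)

theory Defs
  imports Main
begin

text \<open>A polarity (X, par, Y) with explicit carriers X, Y; par x y means x \<parallel> y.
  S y x means y S_v x (S_v \<subseteq> Y \<times> X).\<close>

definition lpr :: "'b set \<Rightarrow> ('a \<Rightarrow> 'b \<Rightarrow> bool) \<Rightarrow> 'a set \<Rightarrow> 'b set" where
  "lpr Y par U = {y \<in> Y. \<forall>x\<in>U. par x y}"

definition rpr :: "'a set \<Rightarrow> ('a \<Rightarrow> 'b \<Rightarrow> bool) \<Rightarrow> 'b set \<Rightarrow> 'a set" where
  "rpr X par V = {x \<in> X. \<forall>y\<in>V. par x y}"

text \<open>Stable sets of X (elements of G(X)) and co-stable sets of Y (elements of G(Y)).\<close>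
definition stable :: "'a set \<Rightarrow> 'b set \<Rightarrow> ('a \<Rightarrow> 'b \<Rightarrow> bool) \<Rightarrow> 'a set \<Rightarrow> bool" where
  "stable X Y par A \<longleftrightarrow> A \<subseteq> X \<and> rpr X par (lpr Y par A) = A"

definition costable :: "'a set \<Rightarrow> 'b set \<Rightarrow> ('a \<Rightarrow> 'b \<Rightarrow> bool) \<Rightarrow> 'b set \<Rightarrow> bool" where
  "costable X Y par B \<longleftrightarrow> B \<subseteq> Y \<and> lpr Y par (rpr X par B) = B"

definition leX :: "'b set \<Rightarrow> ('a \<Rightarrow> 'b \<Rightarrow> bool) \<Rightarrow> 'a \<Rightarrow> 'a \<Rightarrow> bool" where
  "leX Y par x z \<longleftrightarrow> lpr Y par {x} \<subseteq> lpr Y par {z}"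

definition leY :: "'a set \<Rightarrow> ('a \<Rightarrow> 'b \<Rightarrow> bool) \<Rightarrow> 'b \<Rightarrow> 'b \<Rightarrow> bool" where
  "leY X par y v \<longleftrightarrow> rpr X par {y} \<subseteq> rpr X par {v}"

definition GammaX :: "'a set \<Rightarrow> 'b set \<Rightarrow> ('a \<Rightarrow> 'b \<Rightarrow> bool) \<Rightarrow> 'a \<Rightarrow> 'a set" where
  "GammaX X Y par x = {z \<in> X. leX Y par x z}"

definition GammaY :: "'a set \<Rightarrow> 'b set \<Rightarrow> ('a \<Rightarrow> 'b \<Rightarrow> bool) \<Rightarrow> 'b \<Rightarrow> 'b set" where
  "GammaY X Y par y = {v \<in> Y. leY X par y v}"

definition separated :: "'a set \<Rightarrow> 'b set \<Rightarrow> ('a \<Rightarrow> 'b \<Rightarrow> bool) \<Rightarrow> bool" where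
  "separated X Y par \<longleftrightarrow>
     (\<forall>x\<in>X. \<forall>z\<in>X. leX Y par x z \<and> leX Y par z x \<longrightarrow> x = z) \<and>
     (\<forall>y\<in>Y. \<forall>v\<in>Y. leY X par y v \<and> leY X par v y \<longrightarrow> y = v)"

definition Sx :: "'b set \<Rightarrow> ('b \<Rightarrow> 'a \<Rightarrow> bool) \<Rightarrow> 'a \<Rightarrow> 'b set" where
  "Sx Y S x = {y \<in> Y. S y x}"

definition Sy :: "'a set \<Rightarrow> ('b \<Rightarrow> 'a \<Rightarrow> bool) \<Rightarrow> 'b \<Rightarrow> 'a set" where
  "Sy X S y = {x \<in> X. S y x}"

definition Sprime :: "'b set \<Rightarrow> ('a \<Rightarrow> 'b \<Rightarrow> bool) \<Rightarrow> ('b \<Rightarrow> 'a \<Rightarrow> bool) \<Rightarrow> 'a \<Rightarrow> 'a \<Rightarrow> bool" where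
  "Sprime Y par S z x \<longleftrightarrow> (\<forall>y\<in>Y. S y x \<longrightarrow> par z y)"

definition frame :: "'a set \<Rightarrow> 'b set \<Rightarrow> ('a \<Rightarrow> 'b \<Rightarrow> bool) \<Rightarrow> ('b \<Rightarrow> 'a \<Rightarrow> bool) \<Rightarrow> bool" where
  "frame X Y par S \<longleftrightarrow>
     \<comment> \<open>S_v \<subseteq> Y \<times> X\<close>
     (\<forall>y x. S y x \<longrightarrow> y \<in> Y \<and> x \<in> X) \<and>
     \<comment> \<open>(F0)\<close>
     (\<forall>x\<in>X. \<exists>y\<in>Y. \<not> par x y) \<and> (\<forall>y\<in>Y. \<exists>x\<in>X. \<not> par x y) \<and>
     \<comment> \<open>(F1)\<close>
     separated X Y par \<and>
     \<comment> \<open>(F2): each S_v x is a closed element of G(Y)\<close>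
     (\<forall>x\<in>X. \<exists>y\<in>Y. Sx Y S x = GammaY X Y par y) \<and>
     \<comment> \<open>(F3): each y S_v is a down-set\<close>
     (\<forall>y\<in>Y. \<forall>x\<in>X. \<forall>z\<in>X. x \<in> Sy X S y \<and> leX Y par z x \<longrightarrow> z \<in> Sy X S y) \<and>
     \<comment> \<open>(F4)\<close>
     (\<forall>x\<in>X. stable X Y par {z \<in> X. Sprime Y par S z x}) \<and>
     (\<forall>z\<in>X. stable X Y par {x \<in> X. Sprime Y par S z x})"

definition perp :: "'b set \<Rightarrow> ('a \<Rightarrow> 'b \<Rightarrow> bool) \<Rightarrow> ('b \<Rightarrow> 'a \<Rightarrow> bool) \<Rightarrow> 'a \<Rightarrow> 'a \<Rightarrow> bool" where
  "perp Y par S x z \<longleftrightarrow> Sprime Y par S x z"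

definition star :: "'a set \<Rightarrow> 'b set \<Rightarrow> ('a \<Rightarrow> 'b \<Rightarrow> bool) \<Rightarrow> ('b \<Rightarrow> 'a \<Rightarrow> bool) \<Rightarrow> 'a set \<Rightarrow> 'a set" where
  "star X Y par S A = {x \<in> X. \<forall>z\<in>A. perp Y par S x z}"

definition etaS :: "'a set \<Rightarrow> 'b set \<Rightarrow> ('a \<Rightarrow> 'b \<Rightarrow> bool) \<Rightarrow> ('b \<Rightarrow> 'a \<Rightarrow> bool) \<Rightarrow> 'a set \<Rightarrow> 'b set" where
  "etaS X Y par S A = lpr Y par (rpr X par (\<Union>x\<in>A. Sx Y S x))"

definition tri :: "'a set \<Rightarrow> 'b set \<Rightarrow> ('a \<Rightarrow> 'b \<Rightarrow> bool) \<Rightarrow> ('b \<Rightarrow> 'a \<Rightarrow> bool) \<Rightarrow> 'a set \<Rightarrow> 'a set" where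
  "tri X Y par S A = {x \<in> X. etaS X Y par S (GammaX X Y par x) \<subseteq> lpr Y par A}"

end

theory Submission
  imports Defs
begin

text \<open>Everything reduces to the principal stable sets \<open>\<Gamma>z\<close>. By (F4) the set
  \<open>{u. x \<perp> u}\<close> is stable, hence an up-set, so \<open>x \<in> (\<Gamma>z)\<^sup>*\<close> iff \<open>x \<perp> z\<close>; and by (F3)
  \<open>\<eta>\<^sub>S(\<Gamma>x)\<close> is the closure of \<open>S\<^sub>\<or>x\<close>, so \<open>x \<in> A\<^sup>\<triangle>\<close> iff \<open>a \<perp> x\<close> for all \<open>a \<in> A\<close>.
  Thus \<open>A\<^sup>*\<close> and \<open>A\<^sup>\<triangle>\<close> are the two one-sided orthogonals of \<open>A\<close> under \<open>\<perp>\<close>, and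
  testing (2) and (3) on \<open>A = \<Gamma>z\<close> yields the symmetry of \<open>\<perp>\<close>.\<close>

lemma stable_subset: "stable X Y par A \<Longrightarrow> A \<subseteq> X"
  unfolding stable_def by simp

lemma stable_upward_closed:
  assumes "stable X Y par A" "z \<in> A" "leX Y par z w" "w \<in> X"
  shows "w \<in> A"
proof -
  have "w \<in> rpr X par (lpr Y par A)"
    using assms unfolding rpr_def lpr_def leX_def by blast
  then show ?thesis using assms(1) unfolding stable_def by simp
qed

lemma GammaX_subset: "GammaX X Y par z \<subseteq> X"
  unfolding GammaX_def by auto

lemma GammaX_self: "z \<in> X \<Longrightarrow> z \<in> GammaX X Y par z"
  unfolding GammaX_def leX_def by simp

lemma stable_GammaX:
  assumes "z \<in> X"
  shows "stable X Y par (GammaX X Y par z)"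
proof -
  have "w \<in> GammaX X Y par z" if w: "w \<in> rpr X par (lpr Y par (GammaX X Y par z))" for w
  proof -
    have "lpr Y par {z} \<subseteq> lpr Y par (GammaX X Y par z)"
      unfolding lpr_def GammaX_def leX_def by blast
    then have "lpr Y par {z} \<subseteq> lpr Y par {w}"
      using w unfolding rpr_def lpr_def by blast
    then show ?thesis using w unfolding GammaX_def leX_def rpr_def by auto
  qed
  moreover have "GammaX X Y par z \<subseteq> rpr X par (lpr Y par (GammaX X Y par z))"
    unfolding rpr_def lpr_def GammaX_def by auto
  ultimately show ?thesis unfolding stable_def GammaX_def by blast
qed

lemma lpr_rpr_subset_lpr_iff:
  assumes "B \<subseteq> Y" "A \<subseteq> X"
  shows "lpr Y par (rpr X par B) \<subseteq> lpr Y par A \<longleftrightarrow> B \<subseteq> lpr Y par A"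
proof
  assume "lpr Y par (rpr X par B) \<subseteq> lpr Y par A"
  moreover have "B \<subseteq> lpr Y par (rpr X par B)"
    using assms(1) unfolding lpr_def rpr_def by auto
  ultimately show "B \<subseteq> lpr Y par A" by blast
next
  assume "B \<subseteq> lpr Y par A"
  then have "A \<subseteq> rpr X par B"
    using assms(2) unfolding lpr_def rpr_def by blast
  then show "lpr Y par (rpr X par B) \<subseteq> lpr Y par A"
    unfolding lpr_def by blast
qed

lemma frame_perp_upward_closed:
  assumes fr: "frame X Y par S" and "x \<in> X" "z \<in> X" "perp Y par S x z"
    and "w \<in> GammaX X Y par z"
  shows "perp Y par S x w"
proof -
  have "stable X Y par {u \<in> X. Sprime Y par S x u}"
    using fr assms(2) unfolding frame_def by blast
  then show ?thesis
    using assms(3-5) stable_upward_closed unfolding GammaX_def perp_def by fastforce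
qed

lemma frame_mem_star_GammaX_iff:
  assumes "frame X Y par S" "x \<in> X" "z \<in> X"
  shows "x \<in> star X Y par S (GammaX X Y par z) \<longleftrightarrow> perp Y par S x z"
  using frame_perp_upward_closed[OF assms(1,2,3)] GammaX_self[OF assms(3)] assms(2)
  unfolding star_def by blast

lemma frame_UN_Sx_GammaX:
  assumes fr: "frame X Y par S" and x: "x \<in> X"
  shows "(\<Union>w\<in>GammaX X Y par x. Sx Y S w) = Sx Y S x"
proof
  show "(\<Union>w\<in>GammaX X Y par x. Sx Y S w) \<subseteq> Sx Y S x"
  proof
    fix y assume "y \<in> (\<Union>w\<in>GammaX X Y par x. Sx Y S w)"
    then obtain w where w: "w \<in> GammaX X Y par x" "y \<in> Sx Y S w" by blast
    have down_closed: "\<forall>y\<in>Y. \<forall>x\<in>X. \<forall>z\<in>X. x \<in> Sy X S y \<and> leX Y par z x \<longrightarrow> z \<in> Sy X S y"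
      using fr unfolding frame_def by blast
    have "x \<in> Sy X S y"
      using down_closed w x unfolding GammaX_def Sx_def Sy_def by blast
    then show "y \<in> Sx Y S x" using w unfolding Sx_def Sy_def by auto
  qed
  show "Sx Y S x \<subseteq> (\<Union>w\<in>GammaX X Y par x. Sx Y S w)"
    using GammaX_self[OF x] by blast
qed

lemma frame_mem_tri_iff:
  assumes fr: "frame X Y par S" and A: "A \<subseteq> X" and x: "x \<in> X"
  shows "x \<in> tri X Y par S A \<longleftrightarrow> (\<forall>a\<in>A. perp Y par S a x)"
proof -
  have "x \<in> tri X Y par S A \<longleftrightarrow> lpr Y par (rpr X par (Sx Y S x)) \<subseteq> lpr Y par A"
    using x frame_UN_Sx_GammaX[OF fr x] unfolding tri_def etaS_def by simp
  also have "\<dots> \<longleftrightarrow> Sx Y S x \<subseteq> lpr Y par A"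
    by (rule lpr_rpr_subset_lpr_iff[OF _ A]) (auto simp: Sx_def)
  also have "\<dots> \<longleftrightarrow> (\<forall>a\<in>A. perp Y par S a x)"
    unfolding Sx_def lpr_def perp_def Sprime_def by blast
  finally show ?thesis .
qed

lemma frame_perp_sym_iff_subset_star_star:
  assumes fr: "frame X Y par S"
  shows "(\<forall>x\<in>X. \<forall>z\<in>X. perp Y par S x z \<longrightarrow> perp Y par S z x)
     \<longleftrightarrow> (\<forall>A. stable X Y par A \<longrightarrow> A \<subseteq> star X Y par S (star X Y par S A))"
proof
  assume "\<forall>x\<in>X. \<forall>z\<in>X. perp Y par S x z \<longrightarrow> perp Y par S z x"
  then show "\<forall>A. stable X Y par A \<longrightarrow> A \<subseteq> star X Y par S (star X Y par S A)"
    using stable_subset unfolding star_def by blast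
next
  assume star_star: "\<forall>A. stable X Y par A \<longrightarrow> A \<subseteq> star X Y par S (star X Y par S A)"
  show "\<forall>x\<in>X. \<forall>z\<in>X. perp Y par S x z \<longrightarrow> perp Y par S z x"
  proof (intro ballI impI)
    fix x z assume x: "x \<in> X" and z: "z \<in> X" and "perp Y par S x z"
    then have "x \<in> star X Y par S (GammaX X Y par z)"
      using frame_mem_star_GammaX_iff[OF fr] by blast
    moreover have "z \<in> star X Y par S (star X Y par S (GammaX X Y par z))"
      using star_star stable_GammaX[OF z] GammaX_self[OF z] by blast
    ultimately show "perp Y par S z x" unfolding star_def by blast
  qed
qed

lemma frame_perp_sym_iff_star_eq_tri:
  assumes fr: "frame X Y par S"
  shows "(\<forall>x\<in>X. \<forall>z\<in>X. perp Y par S x z \<longrightarrow> perp Y par S z x)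
     \<longleftrightarrow> (\<forall>A. stable X Y par A \<longrightarrow> star X Y par S A = tri X Y par S A)"
proof
  assume sym: "\<forall>x\<in>X. \<forall>z\<in>X. perp Y par S x z \<longrightarrow> perp Y par S z x"
  show "\<forall>A. stable X Y par A \<longrightarrow> star X Y par S A = tri X Y par S A"
  proof (intro allI impI set_eqI)
    fix A x assume "stable X Y par A"
    then have A: "A \<subseteq> X" by (rule stable_subset)
    have "x \<in> tri X Y par S A \<Longrightarrow> x \<in> X" unfolding tri_def by simp
    then show "x \<in> star X Y par S A \<longleftrightarrow> x \<in> tri X Y par S A"
      using frame_mem_tri_iff[OF fr A] sym A unfolding star_def by blast
  qed
next
  assume star_tri: "\<forall>A. stable X Y par A \<longrightarrow> star X Y par S A = tri X Y par S A"
  show "\<forall>x\<in>X. \<forall>z\<in>X. perp Y par S x z \<longrightarrow> perp Y par S z x"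
  proof (intro ballI impI)
    fix x z assume x: "x \<in> X" and z: "z \<in> X" and "perp Y par S x z"
    then have "x \<in> tri X Y par S (GammaX X Y par z)"
      using frame_mem_star_GammaX_iff[OF fr] star_tri stable_GammaX[OF z] by blast
    then show "perp Y par S z x"
      using frame_mem_tri_iff[OF fr GammaX_subset x] GammaX_self[OF z] by blast
  qed
qed

theorem lemma3p16:
  fixes X :: "'a set" and Y :: "'b set"
    and par :: "'a \<Rightarrow> 'b \<Rightarrow> bool" and S :: "'b \<Rightarrow> 'a \<Rightarrow> bool"
  assumes "frame X Y par S"
  shows "((\<forall>x\<in>X. \<forall>z\<in>X. perp Y par S x z \<longrightarrow> perp Y par S z x)
            \<longleftrightarrow> (\<forall>A. stable X Y par A \<longrightarrow> A \<subseteq> star X Y par S (star X Y par S A)))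
       \<and> ((\<forall>A. stable X Y par A \<longrightarrow> A \<subseteq> star X Y par S (star X Y par S A))
            \<longleftrightarrow> (\<forall>A. stable X Y par A \<longrightarrow> star X Y par S A = tri X Y par S A))"
  using frame_perp_sym_iff_subset_star_star[OF assms]
    frame_perp_sym_iff_star_eq_tri[OF assms] by blast

end
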